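(* Let $n\ge 2$ and let $\beta\in B_n$ be a braid whose closure is a knot. Write the unreduced Burau matrix in block form $$\psi_n(\beta)=\begin{pmatrix}\hat\beta_n&b_\beta\\ c_\beta&d_\beta\end{pmatrix}$$ with $\hat\beta_n$ of size $(n-1)\times(n-1)$, $b_\beta$ a column, $c_\beta$ a row and $d_\beta\in\mathbb{Z}[t^{\pm1}]$. Then $\det(I_{n-1}-\hat\beta_n)\neq0$ and, in $\mathbb{Q}(t)$, $$d_\beta+c_\beta(I_{n-1}-\hat\beta_n)^{-1}b_\beta=1.$$
   Context: $\psi_n\colon B_n\to\mathrm{GL}_n(\mathbb{Z}[t^{\pm1}])$ is the unreduced Burau representation sending the Artin generator $\sigma_i$ to $I_{i-1}\oplus\left(\begin{smallmatrix}1-t&t\\1&0\end{smallmatrix}\right)\oplus I_{n-i-1}$; $I_k$ is the $k\times k$ identity matrix. *)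

theory Defs
  imports "HOL-Computational_Algebra.Fraction_Field" "HOL-Computational_Algebra.Polynomial"
    "HOL-Combinatorics.Transposition"
    "Jordan_Normal_Form.Determinant"
begin

type_synonym qt = "rat poly fract"

definition tvar :: qt where "tvar = Fract [:0, 1:] 1"

text \<open>Braid words: a letter (i, True) is the Artin generator sigma_(i+1) (0-based index i,
  acting on strands i and i+1), a letter (i, False) is its inverse.\<close>
type_synonym braid_word = "(nat \<times> bool) list"

definition valid_word :: "nat \<Rightarrow> braid_word \<Rightarrow> bool" where
  "valid_word n w \<longleftrightarrow> (\<forall>g \<in> set w. Suc (fst g) < n)"

definition burau_gen :: "nat \<Rightarrow> nat \<times> bool \<Rightarrow> qt mat" where
  "burau_gen n g = (let i = fst g; t = tvar in
     mat n n (\<lambda>(r, c).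
       if snd g then
         (if r = i \<and> c = i then 1 - t
          else if r = i \<and> c = Suc i then t
          else if r = Suc i \<and> c = i then 1
          else if r = Suc i \<and> c = Suc i then 0
          else if r = c then 1 else 0)
       else
         (if r = i \<and> c = i then 0
          else if r = i \<and> c = Suc i then 1
          else if r = Suc i \<and> c = i then inverse t
          else if r = Suc i \<and> c = Suc i then 1 - inverse t
          else if r = c then 1 else 0)))"

definition burau :: "nat \<Rightarrow> braid_word \<Rightarrow> qt mat" where
  "burau n w = foldr (\<lambda>g M. burau_gen n g * M) w (1\<^sub>m n)"

definition braid_perm :: "braid_word \<Rightarrow> nat \<Rightarrow> nat" where
  "braid_perm w = foldr (\<lambda>g p. transpose (fst g) (Suc (fst g)) \<circ> p) w id"

text \<open>The closure of the braid is a knot (one component) iff the strand permutation is a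
  single n-cycle, i.e. the orbit of strand 0 is all of {0..<n}.\<close>
definition closure_is_knot :: "nat \<Rightarrow> braid_word \<Rightarrow> bool" where
  "closure_is_knot n w \<longleftrightarrow> (\<forall>j < n. \<exists>k. (braid_perm w ^^ k) 0 = j)"

end

theory Submission
  imports Defs "HOL-Combinatorics.Orbits"
begin

text \<open>Multiplying every generator matrix by \<open>t\<close> makes all Burau entries polynomials, and at
  \<open>t = 1\<close> the scaled Burau matrix of \<open>\<beta>\<close> is the permutation matrix \<open>P\<close> of its strand
  permutation. Hence \<open>det (I - \<beta>\<^sub>n)\<close> is a power of \<open>t\<^sup>-\<^sup>1\<close> times a polynomial whose value at
  \<open>t = 1\<close> is \<open>det (I - P')\<close>, where \<open>P'\<close> is \<open>P\<close> with last row and column deleted. Since the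
  permutation is an \<open>n\<close>-cycle, \<open>I - P'\<close> is invertible: a kernel vector, padded by \<open>0\<close>, would be
  constant along the cycle. For the identity, every row of a Burau matrix sums to \<open>1\<close>; in block
  form this says \<open>b = (I - \<beta>\<^sub>n) \<one>\<close> and \<open>d + c \<one> = 1\<close>, so
  \<open>d + c (I - \<beta>\<^sub>n)\<^sup>-\<^sup>1 b = d + c \<one> = 1\<close>.\<close>

lemma mult_smult_smult_mat:
  fixes A B :: "'a :: comm_semiring_0 mat"
  assumes "A \<in> carrier_mat nr n" "B \<in> carrier_mat n nc"
  shows "(a \<cdot>\<^sub>m A) * (b \<cdot>\<^sub>m B) = (a * b) \<cdot>\<^sub>m (A * B)"
  using assms by (intro eq_matI) (auto simp: mult_smult_assoc_mat mult_smult_distrib ac_simps)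

definition perm_mat :: "nat \<Rightarrow> (nat \<Rightarrow> nat) \<Rightarrow> 'a :: {zero, one} mat" where
  "perm_mat n p = mat n n (\<lambda>(i, j). if i = p j then 1 else 0)"

lemma perm_mat_mult:
  assumes "q permutes {..<n}"
  shows "perm_mat n p * perm_mat n q = (perm_mat n (p \<circ> q) :: 'a :: semiring_1 mat)"
proof (rule eq_matI)
  fix i j
  assume ij: "i < dim_row (perm_mat n (p \<circ> q) :: 'a mat)" "j < dim_col (perm_mat n (p \<circ> q) :: 'a mat)"
  then have "q j < n" using permutes_in_image[OF assms] by (simp add: perm_mat_def)
  have "(perm_mat n p * perm_mat n q :: 'a mat) $$ (i, j) =
      (\<Sum>k<n. (if i = p k then 1 else 0) * (if k = q j then 1 else 0))"
    using ij by (simp add: perm_mat_def scalar_prod_def atLeast0LessThan)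
  also have "\<dots> = (\<Sum>k<n. if k = q j then (if i = p k then 1 else 0) else 0)"
    by (intro sum.cong) auto
  finally show "(perm_mat n p * perm_mat n q) $$ (i, j) = (perm_mat n (p \<circ> q) :: 'a mat) $$ (i, j)"
    using ij \<open>q j < n\<close> by (simp add: perm_mat_def)
qed (simp_all add: perm_mat_def)

lemma det_one_minus_perm_block_nonzero:
  fixes p :: "nat \<Rightarrow> nat"
  assumes perm: "p permutes {..<Suc m}" and cyclic: "cyclic_on p {..<Suc m}"
  shows "det (1\<^sub>m m - mat m m (\<lambda>(i, j). if i = p j then 1 else 0) :: 'a :: field mat) \<noteq> 0"
    (is "det ?R \<noteq> 0")
proof
  have "?R \<in> carrier_mat m m" by (intro minus_carrier_mat) auto
  moreover assume "det ?R = 0"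
  ultimately obtain v where v: "v \<in> carrier_vec m" "v \<noteq> 0\<^sub>v m" "?R *\<^sub>v v = 0\<^sub>v m"
    using det_0_iff_vec_prod_zero by blast
  have fixed: "v $ i = (\<Sum>j<m. if i = p j then v $ j else 0)" if "i < m" for i
  proof -
    have "0 = (?R *\<^sub>v v) $ i" using v(3) that by simp
    also have "\<dots> = (\<Sum>j<m. (if i = j then v $ j else 0) - (if i = p j then v $ j else 0))"
      using that v(1)
      by (auto simp: scalar_prod_def atLeast0LessThan left_diff_distrib intro!: sum.cong)
    also have "\<dots> = v $ i - (\<Sum>j<m. if i = p j then v $ j else 0)"
      using that by (simp add: sum_subtractf)
    finally show ?thesis by simp
  qed
  define u where "u j = (if j < m then v $ j else 0)" for j
  have u_step: "u (p c) = (if p c = m then 0 else u c)" if "c < Suc m" for c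
  proof -
    have "p c < Suc m" using permutes_in_image[OF perm] that by simp
    moreover have "(\<Sum>j<m. if p c = p j then v $ j else 0) = u c"
      using permutes_inj[OF perm] by (simp add: u_def inj_eq)
    ultimately show ?thesis using fixed[of "p c"] by (simp add: u_def)
  qed
  have u_orbit: "u ((p ^^ k) m) = 0" for k
  proof (induction k)
    case (Suc k)
    have "(p ^^ k) m < Suc m" using permutes_in_funpow_image[OF perm] by simp
    then show ?case using Suc u_step by simp
  qed (simp add: u_def)
  have "{(p ^^ k) m | k. True} = {..<Suc m}"
    using cyclic orbit_altdef_permutation[OF permutes_imp_permutation[OF _ perm]]
    by (simp add: cyclic_on_alldef)
  then have "u j = 0" if "j < Suc m" for j
    using that u_orbit by (simp add: set_eq_iff) metis
  then have "v $ i = 0" if "i < m" for i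
    using that by (metis less_SucI u_def)
  then have "v = 0\<^sub>v m"
    using v(1) by (intro eq_vecI) auto
  with v(2) show False ..
qed

lemma split_block_unit_row_sums:
  fixes M :: "'a :: field mat"
  assumes M: "M \<in> carrier_mat (Suc m) (Suc m)"
    and row_sums: "M *\<^sub>v vec (Suc m) (\<lambda>_. 1) = vec (Suc m) (\<lambda>_. 1)"
    and split: "split_block M m m = (A, B, C, D)"
    and Ainv: "Ainv \<in> carrier_mat m m" "(1\<^sub>m m - A) * Ainv = 1\<^sub>m m"
  shows "D $$ (0, 0) + (C * Ainv * B) $$ (0, 0) = 1"
proof -
  have blocks: "A = mat m m (\<lambda>ij. M $$ ij)" "B = mat m 1 (\<lambda>(i, j). M $$ (i, j + m))"
      "C = mat 1 m (\<lambda>(i, j). M $$ (i + m, j))" "D = mat 1 1 (\<lambda>(i, j). M $$ (i + m, j + m))"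
    using split M by (auto simp: split_block_def Let_def)
  have row_sum: "(\<Sum>k<m. M $$ (r, k)) + M $$ (r, m) = 1" if "r < Suc m" for r
    using arg_cong[OF row_sums, of "\<lambda>v. v $ r"] that M
    by (simp add: scalar_prod_def atLeast0LessThan)
  define E :: "'a mat" where "E = mat m 1 (\<lambda>_. 1)"
  have IA: "1\<^sub>m m - A \<in> carrier_mat m m" and C: "C \<in> carrier_mat 1 m" and E: "E \<in> carrier_mat m 1"
    by (auto simp: blocks E_def)
  have B: "B = (1\<^sub>m m - A) * E"
  proof (rule eq_matI)
    fix i j assume "i < dim_row ((1\<^sub>m m - A) * E)" "j < dim_col ((1\<^sub>m m - A) * E)"
    then have ij: "i < m" "j = 0" by (auto simp: E_def blocks)
    have "((1\<^sub>m m - A) * E) $$ (i, j) = (\<Sum>k<m. (if i = k then 1 else 0) - M $$ (i, k))"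
      using ij by (auto simp: E_def blocks scalar_prod_def atLeast0LessThan intro!: sum.cong)
    also have "\<dots> = M $$ (i, m)"
      using ij row_sum[of i] by (simp add: sum_subtractf algebra_simps)
    finally show "B $$ (i, j) = ((1\<^sub>m m - A) * E) $$ (i, j)"
      using ij by (simp add: blocks)
  qed (auto simp: blocks E_def)
  have "C * Ainv * B = C * (Ainv * ((1\<^sub>m m - A) * E))"
    by (simp add: B assoc_mult_mat[OF C Ainv(1) mult_carrier_mat[OF IA E]])
  also have "\<dots> = C * (Ainv * (1\<^sub>m m - A) * E)"
    by (simp add: assoc_mult_mat[OF Ainv(1) IA E])
  also have "\<dots> = C * E"
    using mat_mult_left_right_inverse[OF IA Ainv] E by simp
  finally show ?thesis
    using row_sum[of m] by (simp add: blocks E_def scalar_prod_def atLeast0LessThan add.commute)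
qed

interpretation to_fract_hom: comm_ring_hom "to_fract :: 'a::idom \<Rightarrow> 'a fract"
  by unfold_locales auto

interpretation poly_eval_hom: comm_ring_hom "\<lambda>p. poly p a" for a
  by unfold_locales auto

lemma to_fract_X: "to_fract [:0, 1:] = tvar"
  by (simp add: tvar_def to_fract_def)

lemma tvar_nonzero: "tvar \<noteq> 0"
  by (simp flip: to_fract_X)

definition scaled_burau_gen :: "nat \<Rightarrow> nat \<times> bool \<Rightarrow> rat poly mat" where
  "scaled_burau_gen n g = (let i = fst g in
     mat n n (\<lambda>(r, c).
       if snd g then
         (if r = i \<and> c = i then [:0, 1, -1:]
          else if r = i \<and> c = Suc i then [:0, 0, 1:]
          else if r = Suc i \<and> c = i then [:0, 1:]
          else if r = Suc i \<and> c = Suc i then 0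
          else if r = c then [:0, 1:] else 0)
       else
         (if r = i \<and> c = i then 0
          else if r = i \<and> c = Suc i then [:0, 1:]
          else if r = Suc i \<and> c = i then 1
          else if r = Suc i \<and> c = Suc i then [:-1, 1:]
          else if r = c then [:0, 1:] else 0)))"

lemma to_fract_quadratic_polys:
  "to_fract [:0, 0, 1:] = tvar ^ 2" "to_fract [:0, 1, -1:] = tvar - tvar ^ 2"
  "to_fract [:-1, 1:] = tvar - 1"
proof -
  have "[:0, 0, 1:] = [:0, 1::rat:] ^ 2" "[:0, 1, -1:] = [:0, 1::rat:] - [:0, 1:] ^ 2"
    "[:-1, 1:] = [:0, 1::rat:] - 1"
    by (simp_all add: power2_eq_square one_pCons)
  then show "to_fract [:0, 0, 1:] = tvar ^ 2" "to_fract [:0, 1, -1:] = tvar - tvar ^ 2"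
    "to_fract [:-1, 1:] = tvar - 1"
    by (simp_all add: to_fract_X to_fract_hom.hom_power)
qed

lemma burau_gen_eq_scaled:
  "burau_gen n g = inverse tvar \<cdot>\<^sub>m map_mat to_fract (scaled_burau_gen n g)"
  by (rule eq_matI)
     (auto simp: burau_gen_def scaled_burau_gen_def Let_def to_fract_X to_fract_quadratic_polys
        tvar_nonzero field_simps power2_eq_square)

definition scaled_burau :: "nat \<Rightarrow> braid_word \<Rightarrow> rat poly mat" where
  "scaled_burau n w = foldr (\<lambda>g M. scaled_burau_gen n g * M) w (1\<^sub>m n)"

lemma scaled_burau_gen_carrier: "scaled_burau_gen n g \<in> carrier_mat n n"
  by (simp add: scaled_burau_gen_def Let_def)

lemma scaled_burau_Cons: "scaled_burau n (g # w) = scaled_burau_gen n g * scaled_burau n w"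
  by (simp add: scaled_burau_def)

lemma scaled_burau_carrier: "scaled_burau n w \<in> carrier_mat n n"
  by (induction w)
     (auto simp: scaled_burau_def intro: mult_carrier_mat[OF scaled_burau_gen_carrier])

lemma burau_eq_scaled:
  "burau n w = inverse tvar ^ length w \<cdot>\<^sub>m map_mat to_fract (scaled_burau n w)"
proof (induction w)
  case Nil
  show ?case by (rule eq_matI) (auto simp: burau_def scaled_burau_def)
next
  case (Cons g w)
  have G: "map_mat to_fract (scaled_burau_gen n g) \<in> carrier_mat n n"
    and W: "map_mat to_fract (scaled_burau n w) \<in> carrier_mat n n"
    by (simp_all add: scaled_burau_gen_carrier scaled_burau_carrier)
  have "burau n (g # w) = burau_gen n g * burau n w"
    by (simp add: burau_def)
  also have "\<dots> = inverse tvar ^ length (g # w) \<cdot>\<^sub>m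
      (map_mat to_fract (scaled_burau_gen n g) * map_mat to_fract (scaled_burau n w))"
    by (simp add: Cons.IH burau_gen_eq_scaled mult_smult_smult_mat[OF G W])
  also have "\<dots> = inverse tvar ^ length (g # w) \<cdot>\<^sub>m map_mat to_fract (scaled_burau n (g # w))"
    by (simp add: scaled_burau_Cons to_fract_hom.mat_hom_mult[OF scaled_burau_gen_carrier
          scaled_burau_carrier])
  finally show ?case .
qed

lemma braid_perm_Cons: "braid_perm (g # w) = transpose (fst g) (Suc (fst g)) \<circ> braid_perm w"
  by (simp add: braid_perm_def)

lemma braid_perm_permutes: "valid_word n w \<Longrightarrow> braid_perm w permutes {..<n}"
  by (induction w)
     (auto simp: braid_perm_def valid_word_def intro!: permutes_compose permutes_swap_id)

lemma scaled_burau_gen_at_1: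
  "Suc (fst g) < n \<Longrightarrow>
    map_mat (\<lambda>q. poly q 1) (scaled_burau_gen n g) = perm_mat n (transpose (fst g) (Suc (fst g)))"
  by (rule eq_matI) (auto simp: scaled_burau_gen_def perm_mat_def Let_def transpose_def)

lemma scaled_burau_at_1:
  "valid_word n w \<Longrightarrow> map_mat (\<lambda>q. poly q 1) (scaled_burau n w) = perm_mat n (braid_perm w)"
proof (induction w)
  case Nil
  show ?case by (rule eq_matI) (auto simp: scaled_burau_def braid_perm_def perm_mat_def)
next
  case (Cons g w)
  then have "Suc (fst g) < n" "valid_word n w" by (simp_all add: valid_word_def)
  then show ?case
    using Cons.IH braid_perm_permutes[of n w]
    by (simp add: scaled_burau_Cons poly_eval_hom.mat_hom_mult[OF scaled_burau_gen_carrier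
          scaled_burau_carrier] scaled_burau_gen_at_1 perm_mat_mult braid_perm_Cons comp_def)
qed

lemma closure_is_knot_cyclic_on:
  assumes "valid_word n w" "closure_is_knot n w" "0 < n"
  shows "cyclic_on (braid_perm w) {..<n}"
proof -
  have perm: "braid_perm w permutes {..<n}"
    using assms(1) by (rule braid_perm_permutes)
  have "orbit (braid_perm w) 0 = {(braid_perm w ^^ k) 0 | k. True}"
    by (rule orbit_altdef_permutation[OF permutes_imp_permutation[OF _ perm]]) simp
  also have "\<dots> = {..<n}"
    using assms(2,3) permutes_in_funpow_image[OF perm, of 0] by (auto simp: closure_is_knot_def)
  finally show ?thesis
    using assms(3) unfolding cyclic_on_def by blast
qed

lemma det_one_minus_burau_block_nonzero:
  assumes "valid_word (Suc m) w" "cyclic_on (braid_perm w) {..<Suc m}"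
  shows "det (1\<^sub>m m - mat m m (\<lambda>ij. burau (Suc m) w $$ ij)) \<noteq> 0"
proof -
  define P where "P = scaled_burau (Suc m) w"
  define c where "c = inverse tvar ^ length w"
  define Q :: "rat poly mat"
    where "Q = mat m m (\<lambda>(i, j). (if i = j then [:0, 1:] ^ length w else 0) - P $$ (i, j))"
  have P: "P \<in> carrier_mat (Suc m) (Suc m)"
    by (simp add: P_def scaled_burau_carrier)
  have "c * tvar ^ length w = 1"
    using tvar_nonzero by (simp add: c_def power_inverse)
  then have "1\<^sub>m m - mat m m (\<lambda>ij. burau (Suc m) w $$ ij) = c \<cdot>\<^sub>m map_mat to_fract Q"
    using P by (intro eq_matI)
      (auto simp: Q_def P_def c_def burau_eq_scaled to_fract_X to_fract_hom.hom_power
        right_diff_distrib)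
  moreover have "c \<noteq> 0"
    using tvar_nonzero by (simp add: c_def)
  moreover have "map_mat (\<lambda>q. poly q 1) Q =
      1\<^sub>m m - mat m m (\<lambda>(i, j). if i = braid_perm w j then 1 else 0)"
  proof (rule eq_matI)
    fix i j
    assume "i < dim_row (1\<^sub>m m - mat m m (\<lambda>(i, j). if i = braid_perm w j then 1 else 0) :: rat mat)"
      and "j < dim_col (1\<^sub>m m - mat m m (\<lambda>(i, j). if i = braid_perm w j then 1 else 0) :: rat mat)"
    then have "i < m" "j < m" by simp_all
    then show "map_mat (\<lambda>q. poly q 1) Q $$ (i, j) =
        (1\<^sub>m m - mat m m (\<lambda>(i, j). if i = braid_perm w j then 1 else 0)) $$ (i, j)"
      using arg_cong[OF scaled_burau_at_1[OF assms(1)], of "\<lambda>M. M $$ (i, j)"] P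
      by (simp add: Q_def P_def perm_mat_def)
  qed (simp_all add: Q_def)
  then have "poly (det Q) 1 \<noteq> 0"
    using det_one_minus_perm_block_nonzero[OF braid_perm_permutes[OF assms(1)] assms(2)]
    by (simp flip: poly_eval_hom.hom_det)
  then have "det Q \<noteq> 0" by auto
  ultimately show ?thesis
    by (simp add: Q_def)
qed

lemma burau_gen_carrier: "burau_gen n g \<in> carrier_mat n n"
  by (simp add: burau_gen_def Let_def)

lemma burau_gen_row_sums:
  assumes "Suc (fst g) < n"
  shows "burau_gen n g *\<^sub>v vec n (\<lambda>_. 1) = vec n (\<lambda>_. 1)"
proof (rule eq_vecI)
  fix r assume "r < dim_vec (vec n (\<lambda>_. 1) :: qt vec)"
  then have r: "r < n" by simp
  define i where "i = fst g"
  have "(\<Sum>c<n. burau_gen n g $$ (r, c)) = 1"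
  proof (cases "r = i \<or> r = Suc i")
    case True
    have "(\<Sum>c<n. burau_gen n g $$ (r, c)) = (\<Sum>c\<in>{i, Suc i}. burau_gen n g $$ (r, c))"
      using True assms r by (intro sum.mono_neutral_right) (auto simp: burau_gen_def i_def Let_def)
    also have "\<dots> = 1"
      using True assms r by (auto simp: burau_gen_def i_def Let_def)
    finally show ?thesis .
  next
    case False
    then have "(\<Sum>c<n. burau_gen n g $$ (r, c)) = (\<Sum>c<n. if c = r then 1 else 0)"
      using assms r by (intro sum.cong) (auto simp: burau_gen_def i_def Let_def)
    with r show ?thesis by simp
  qed
  then show "(burau_gen n g *\<^sub>v vec n (\<lambda>_. 1)) $ r = vec n (\<lambda>_. 1) $ r"
    using r by (simp add: burau_gen_def Let_def scalar_prod_def atLeast0LessThan)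
qed (simp add: burau_gen_def Let_def)

lemma burau_row_sums:
  "valid_word n w \<Longrightarrow> burau n w *\<^sub>v vec n (\<lambda>_. 1) = vec n (\<lambda>_. 1)"
proof (induction w)
  case Nil
  show ?case by (simp add: burau_def)
next
  case (Cons g w)
  have "burau n w \<in> carrier_mat n n"
    by (simp add: burau_eq_scaled scaled_burau_carrier)
  with Cons show ?case
    by (simp add: burau_def valid_word_def burau_gen_row_sums
        assoc_mult_mat_vec[OF burau_gen_carrier _ vec_carrier])
qed

theorem mainTheorem7:
  fixes n :: nat and w :: braid_word
    and A B C D :: "qt mat"
  assumes "n \<ge> 2"
    and "valid_word n w"
    and "closure_is_knot n w"
    and "split_block (burau n w) (n - 1) (n - 1) = (A, B, C, D)"
  shows "det (1\<^sub>m (n - 1) - A) \<noteq> 0 \<and>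
         (\<forall>Ainv \<in> carrier_mat (n - 1) (n - 1).
            (1\<^sub>m (n - 1) - A) * Ainv = 1\<^sub>m (n - 1) \<longrightarrow>
            D $$ (0, 0) + (C * Ainv * B) $$ (0, 0) = 1)"
proof -
  obtain m where n: "n = Suc m"
    using assms(1) by (cases n) auto
  have M: "burau n w \<in> carrier_mat (Suc m) (Suc m)"
    by (simp add: n burau_eq_scaled scaled_burau_carrier)
  have "A = mat m m (\<lambda>ij. burau n w $$ ij)"
    using assms(4) M by (simp add: n split_block_def Let_def)
  then have "det (1\<^sub>m m - A) \<noteq> 0"
    using det_one_minus_burau_block_nonzero closure_is_knot_cyclic_on assms(2,3) by (simp add: n)
  moreover have "D $$ (0, 0) + (C * Ainv * B) $$ (0, 0) = 1"
    if "Ainv \<in> carrier_mat m m" "(1\<^sub>m m - A) * Ainv = 1\<^sub>m m" for Ainv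
    using split_block_unit_row_sums[OF M _ _ that] burau_row_sums[OF assms(2)] assms(4)
    by (simp add: n)
  ultimately show ?thesis
    by (simp add: n)
qed

end
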